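(* Let $\delta\in(0,1)$, $\sigma_z^2>0$, let $B\sim p_\beta$ (finite second moment) and $Z\sim N(0,1)$ be independent, and let $\eta(a;\tau)=(|a|-\tau)_+\mathrm{sign}(a)$. Let $(\chi,\hat\sigma,\lambda)$ with $\chi>0$, $\hat\sigma>0$, $\lambda>0$ satisfy \[ \hat{\sigma}^2=\sigma_z^2+\frac{1}{\delta}\mathbb{E}_{B,Z}\left[(\eta(B+\hat{\sigma}Z; \chi \hat{\sigma})-B)^2\right],\qquad \lambda=\chi\hat{\sigma}\left(1-\frac{1}{\delta}\mathbb{P}(|B+\hat{\sigma}Z|>\chi \hat{\sigma})\right), \] where $\hat\sigma=\hat\sigma(\chi)$ is regarded as the function of $\chi$ determined by the first equation. Then \[ \frac{d}{d\chi}\mathbb{P}\big(|\eta(B+\hat{\sigma}Z;\chi \hat{\sigma})|>0\big) <0 . \]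
   Context: These equations are the fixed-point equations that describe the asymptotic behavior of the LASSO solution with regularization parameter $\lambda>0$ under Gaussian design; for $\sigma_z^2>0$ the first equation has a unique solution $\hat\sigma$ for each $\chi$. *)

theory Defs
  imports "HOL-Probability.Probability"
begin

definition soft_thresh :: "real \<Rightarrow> real \<Rightarrow> real" where
  "soft_thresh a \<tau> = max (\<bar>a\<bar> - \<tau>) 0 * sgn a"

definition N01 :: "real measure" where
  "N01 = density lborel std_normal_density"

definition E_BZ :: "real measure \<Rightarrow> (real \<Rightarrow> real \<Rightarrow> real) \<Rightarrow> real" where
  "E_BZ p f = integral\<^sup>L (p \<Otimes>\<^sub>M N01) (\<lambda>(b, z). f b z)"

definition P_BZ :: "real measure \<Rightarrow> (real \<Rightarrow> real \<Rightarrow> bool) \<Rightarrow> real" where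
  "P_BZ p A = measure (p \<Otimes>\<^sub>M N01) {(b, z). A b z}"

end

theory Submission
  imports Defs "HOL-Real_Asymp.Real_Asymp"
begin

text \<open>
  Put \<open>v = 1 / \<sigma>\<close> and condition on \<open>B\<close>.  With \<open>m(a, c) = E (\<eta>(a + Z; c) - a)\<^sup>2\<close> and
  \<open>q(a, c) = P(\<bar>a + Z\<bar> > c)\<close>, both explicit in \<open>\<Phi>\<close> and \<open>\<phi>\<close>, the fixed-point equation reads
  \<open>R(v, \<chi>) = \<sigma>\<^sub>z\<^sup>2 v\<^sup>2 + E m(vB, \<chi>) / \<delta> - 1 = 0\<close> and the target is \<open>Q(v, \<chi>) = E q(vB, \<chi>)\<close>.
  As \<open>\<partial>\<^sub>a m(a, c) = 2a (\<Phi>(a + c) - \<Phi>(a - c))\<close>, \<open>R\<close> is strictly increasing in \<open>v\<close>, so the root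
  \<open>v(\<chi>)\<close> is continuous and, by implicit differentiation, \<open>v' = -\<partial>\<^sub>\<chi>R / \<partial>\<^sub>vR\<close>, where
  \<open>\<delta> \<partial>\<^sub>\<chi>R / 2 = \<chi> Q - \<psi>\<close> and \<open>\<psi> = E (\<phi>(vB - \<chi>) + \<phi>(vB + \<chi>)) = -\<partial>\<^sub>\<chi>Q > 0\<close>.
  The pointwise inequality \<open>0 \<le> a (\<phi>(a - c) - \<phi>(a + c)) \<le> a\<^sup>2 (\<Phi>(a + c) - \<Phi>(a - c))\<close> yields
  \<open>0 \<le> \<partial>\<^sub>vQ < \<delta> \<partial>\<^sub>vR / 2\<close>.  Hence the indirect term \<open>\<partial>\<^sub>vQ v'\<close> is either nonpositive or
  less than \<open>\<psi> - \<chi> Q\<close>, and in both cases the derivative \<open>\<partial>\<^sub>vQ v' - \<psi>\<close> of the target is negative.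
\<close>

section \<open>Calculus tools\<close>

lemma MVT_abs:
  fixes g g' :: "real \<Rightarrow> real"
  assumes der: "\<And>t. \<bar>t - x\<bar> < d \<Longrightarrow> (g has_real_derivative g' t) (at t)"
    and y: "\<bar>y - x\<bar> < d" "y \<noteq> x"
  shows "\<exists>\<xi>. \<bar>\<xi> - x\<bar> < \<bar>y - x\<bar> \<and> g y - g x = (y - x) * g' \<xi>"
proof (cases "x < y")
  case True
  then obtain \<xi> where "x < \<xi>" "\<xi> < y" "g y - g x = (y - x) * g' \<xi>"
    using MVT2[of x y g g'] der y by force
  then show ?thesis
    by (intro exI[of _ \<xi>]) auto
next
  case False
  then have "y < x"
    using y by auto
  then obtain \<xi> where "y < \<xi>" "\<xi> < x" "g x - g y = (x - y) * g' \<xi>"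
    using MVT2[of y x g g'] der y by force
  then show ?thesis
    by (intro exI[of _ \<xi>]) (auto simp: algebra_simps)
qed

lemma abs_difference_quotient_le:
  fixes g g' :: "real \<Rightarrow> real"
  assumes der: "\<And>t. \<bar>t - x\<bar> < d \<Longrightarrow> (g has_real_derivative g' t) (at t)"
    and bound: "\<And>t. \<bar>t - x\<bar> < d \<Longrightarrow> \<bar>g' t\<bar> \<le> B"
    and y: "\<bar>y - x\<bar> < d" "y \<noteq> x"
  shows "\<bar>(g y - g x) / (y - x)\<bar> \<le> B"
proof -
  obtain \<xi> where "\<bar>\<xi> - x\<bar> < \<bar>y - x\<bar>" "g y - g x = (y - x) * g' \<xi>"
    using MVT_abs[OF der y] by blast
  then show ?thesis
    using y bound[of \<xi>] by simp
qed

lemma DERIV_integral_parametric: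
  fixes f f' :: "'a \<Rightarrow> real \<Rightarrow> real"
  assumes d: "d > 0"
    and meas: "\<And>t. (\<lambda>b. f b t) \<in> borel_measurable M"
    and meas': "(\<lambda>b. f' b x) \<in> borel_measurable M"
    and int: "\<And>t. \<bar>t - x\<bar> < d \<Longrightarrow> integrable M (\<lambda>b. f b t)"
    and der: "\<And>b t. \<bar>t - x\<bar> < d \<Longrightarrow> ((\<lambda>t. f b t) has_real_derivative f' b t) (at t)"
    and bound: "\<And>b t. \<bar>t - x\<bar> < d \<Longrightarrow> \<bar>f' b t\<bar> \<le> w b"
    and int_w: "integrable M w"
  shows "((\<lambda>t. \<integral>b. f b t \<partial>M) has_real_derivative (\<integral>b. f' b x \<partial>M)) (at x)"
  unfolding has_field_derivative_iff tendsto_at_iff_sequentially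
proof (intro allI impI)
  fix X :: "nat \<Rightarrow> real"
  assume X_ne: "\<forall>i. X i \<in> UNIV - {x}" and X: "X \<longlonglongrightarrow> x"
  \<comment> \<open>difference quotients, patched by the derivative while \<open>X n\<close> is still far from \<open>x\<close>\<close>
  define s where "s n b = (if \<bar>X n - x\<bar> < d then (f b (X n) - f b x) / (X n - x) else f' b x)" for n b
  have ev: "eventually (\<lambda>n. \<bar>X n - x\<bar> < d) sequentially"
    using tendstoD[OF X d] by (simp add: dist_real_def)
  have lim: "(\<lambda>n. s n b) \<longlonglongrightarrow> f' b x" for b
  proof -
    have "((\<lambda>y. (f b y - f b x) / (y - x)) \<circ> X) \<longlonglongrightarrow> f' b x"
      using der[of x b] d X_ne X by (simp add: has_field_derivative_iff tendsto_at_iff_sequentially)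
    then show ?thesis
      by (rule Lim_transform_eventually) (use ev in \<open>auto elim!: eventually_mono simp: s_def\<close>)
  qed
  have s_bound: "\<bar>s n b\<bar> \<le> w b" for n b
    using abs_difference_quotient_le[of x d "f b" "f' b" "w b" "X n"] X_ne der bound d
    by (auto simp: s_def)
  have "(\<lambda>b. s n b) \<in> borel_measurable M" for n
    unfolding s_def using meas meas' by (cases "\<bar>X n - x\<bar> < d") auto
  then have "(\<lambda>n. \<integral>b. s n b \<partial>M) \<longlonglongrightarrow> (\<integral>b. f' b x \<partial>M)"
    using meas' int_w lim s_bound by (intro integral_dominated_convergence[where w = w]) auto
  moreover have "eventually (\<lambda>n. (\<integral>b. s n b \<partial>M) =
      ((\<lambda>y. ((\<integral>b. f b y \<partial>M) - (\<integral>b. f b x \<partial>M)) / (y - x)) \<circ> X) n) sequentially"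
    using ev by eventually_elim (use int d in \<open>simp add: s_def\<close>)
  ultimately show "((\<lambda>y. ((\<integral>b. f b y \<partial>M) - (\<integral>b. f b x \<partial>M)) / (y - x)) \<circ> X) \<longlonglongrightarrow> (\<integral>b. f' b x \<partial>M)"
    by (rule Lim_transform_eventually)
qed

lemma isCont_integral_parametric:
  fixes g :: "'a \<Rightarrow> 'b::metric_space \<Rightarrow> real"
  assumes e: "e > 0"
    and meas: "\<And>y. (\<lambda>b. g b y) \<in> borel_measurable M"
    and cont: "\<And>b. isCont (g b) y0"
    and bound: "\<And>b y. dist y y0 < e \<Longrightarrow> \<bar>g b y\<bar> \<le> w b"
    and int_w: "integrable M w"
  shows "isCont (\<lambda>y. \<integral>b. g b y \<partial>M) y0"
  unfolding continuous_at_sequentially comp_def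
proof (intro allI impI)
  fix X :: "nat \<Rightarrow> 'b"
  assume X: "X \<longlonglongrightarrow> y0"
  define s where "s n b = (if dist (X n) y0 < e then g b (X n) else g b y0)" for n b
  have ev: "eventually (\<lambda>n. dist (X n) y0 < e) sequentially"
    using X e by (rule tendstoD)
  have lim: "(\<lambda>n. s n b) \<longlonglongrightarrow> g b y0" for b
  proof -
    have "(\<lambda>n. g b (X n)) \<longlonglongrightarrow> g b y0"
      using cont[of b] X by (simp add: continuous_at_sequentially comp_def)
    then show ?thesis
      by (rule Lim_transform_eventually) (use ev in \<open>auto elim!: eventually_mono simp: s_def\<close>)
  qed
  have "\<bar>s n b\<bar> \<le> w b" for n b
    using bound[of "X n" b] bound[of y0 b] e by (auto simp: s_def)
  moreover have "(\<lambda>b. s n b) \<in> borel_measurable M" for n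
    unfolding s_def using meas by (cases "dist (X n) y0 < e") auto
  ultimately have "(\<lambda>n. \<integral>b. s n b \<partial>M) \<longlonglongrightarrow> (\<integral>b. g b y0 \<partial>M)"
    using meas int_w lim by (intro integral_dominated_convergence[where w = w]) auto
  then show "(\<lambda>n. \<integral>b. g b (X n) \<partial>M) \<longlonglongrightarrow> (\<integral>b. g b y0 \<partial>M)"
    by (rule Lim_transform_eventually) (use ev in \<open>auto elim!: eventually_mono simp: s_def\<close>)
qed

lemma set_integral_Ioi_FTC:
  fixes F f :: "real \<Rightarrow> real"
  assumes "\<And>x. (F has_real_derivative f x) (at x)" "continuous_on UNIV f" "integrable lborel f"
    and "(F \<longlongrightarrow> L) at_top"
  shows "(LBINT x:{t<..}. f x) = L - F t"
proof -
  have "(LBINT x=ereal t..\<infinity>. f x) = L - F t"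
  proof (rule interval_integral_FTC_integrable)
    show "set_integrable lborel (einterval (ereal t) \<infinity>) f"
      unfolding set_integrable_def using assms(3) by (intro integrable_mult_indicator) auto
    show "((F \<circ> real_of_ereal) \<longlongrightarrow> F t) (at_right (ereal t))"
      unfolding ereal_tendsto_simps1
      using assms(1) DERIV_isCont isCont_def tendsto_mono at_le
      by (metis at_right_to_0 order_refl top_greatest)
    show "((F \<circ> real_of_ereal) \<longlongrightarrow> L) (at_left \<infinity>)"
      unfolding ereal_tendsto_simps1 using assms(4) .
  qed (use assms in \<open>auto simp: has_real_derivative_iff_has_vector_derivative[symmetric]
      continuous_on_eq_continuous_at\<close>)
  then show ?thesis
    by (simp add: interval_integral_to_infinity_eq)
qed

lemma set_integral_Iio_FTC:
  fixes F f :: "real \<Rightarrow> real"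
  assumes "\<And>x. (F has_real_derivative f x) (at x)" "continuous_on UNIV f" "integrable lborel f"
    and "(F \<longlongrightarrow> L) at_bot"
  shows "(LBINT x:{..<t}. f x) = F t - L"
proof -
  have "(LBINT x=-\<infinity>..ereal t. f x) = F t - L"
  proof (rule interval_integral_FTC_integrable)
    show "set_integrable lborel (einterval (-\<infinity>) (ereal t)) f"
      unfolding set_integrable_def using assms(3) by (intro integrable_mult_indicator) auto
    show "((F \<circ> real_of_ereal) \<longlongrightarrow> F t) (at_left (ereal t))"
      unfolding ereal_tendsto_simps1
      using assms(1) DERIV_isCont isCont_def tendsto_mono at_le
      by (metis at_left_minus order_refl top_greatest)
    show "((F \<circ> real_of_ereal) \<longlongrightarrow> L) (at_right (-\<infinity>))"
      unfolding ereal_tendsto_simps1 using assms(4) .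
  qed (use assms in \<open>auto simp: has_real_derivative_iff_has_vector_derivative[symmetric]
      continuous_on_eq_continuous_at\<close>)
  then show ?thesis
    by (simp add: interval_lebesgue_integral_def)
qed

text \<open>
  By the mean value theorem the quotient is a value of \<open>Fu\<close> at a point between \<open>(u c, c)\<close> and
  \<open>(u0, c)\<close>, so joint continuity of \<open>Fu\<close> gives the limit.
\<close>

lemma tendsto_partial_difference_quotient:
  fixes F Fu :: "real \<Rightarrow> real \<Rightarrow> real" and u :: "real \<Rightarrow> real"
  assumes d: "d > 0"
    and der: "\<And>v c. \<bar>v - u0\<bar> < d \<Longrightarrow> \<bar>c - c0\<bar> < d \<Longrightarrow> ((\<lambda>v. F v c) has_real_derivative Fu v c) (at v)"
    and cont: "isCont (\<lambda>x. Fu (fst x) (snd x)) (u0, c0)"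
    and u: "(u \<longlongrightarrow> u0) (at c0)"
  shows "((\<lambda>c. if u c = u0 then Fu u0 c0 else (F (u c) c - F u0 c) / (u c - u0)) \<longlongrightarrow> Fu u0 c0) (at c0)"
proof (rule tendstoI)
  fix e :: real
  assume e: "e > 0"
  obtain \<delta> where \<delta>: "\<delta> > 0"
    and close: "\<And>x. dist x (u0, c0) < \<delta> \<Longrightarrow> dist (Fu (fst x) (snd x)) (Fu u0 c0) < e"
    using cont e unfolding continuous_at_eps_delta by force
  define r where "r = min d (\<delta> / 2)"
  have r: "r > 0"
    using d \<delta> by (simp add: r_def)
  have "eventually (\<lambda>c. dist (u c) u0 < r) (at c0)"
    using u r by (rule tendstoD)
  moreover have "eventually (\<lambda>c. dist c c0 < r) (at c0)"
    using r eventually_at by blast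
  ultimately show "eventually (\<lambda>c. dist (if u c = u0 then Fu u0 c0 else (F (u c) c - F u0 c) / (u c - u0))
      (Fu u0 c0) < e) (at c0)"
  proof eventually_elim
    case (elim c)
    show ?case
    proof (cases "u c = u0")
      case False
      have "\<bar>u c - u0\<bar> < d" "\<bar>c - c0\<bar> < d"
        using elim by (auto simp: r_def dist_real_def)
      then obtain \<xi> where \<xi>: "\<bar>\<xi> - u0\<bar> < \<bar>u c - u0\<bar>" "F (u c) c - F u0 c = (u c - u0) * Fu \<xi> c"
        using MVT_abs[of u0 d "\<lambda>v. F v c" "\<lambda>v. Fu v c" "u c"] der False by blast
      have "dist (\<xi>, c) (u0, c0) \<le> \<bar>\<xi> - u0\<bar> + \<bar>c - c0\<bar>"
        unfolding dist_Pair_Pair dist_real_def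
        using sqrt_sum_squares_le_sum_abs[of "\<bar>\<xi> - u0\<bar>" "\<bar>c - c0\<bar>"] by simp
      also have "\<dots> < \<delta>"
        using \<xi> elim by (auto simp: r_def dist_real_def)
      finally have "dist (Fu \<xi> c) (Fu u0 c0) < e"
        using close[of "(\<xi>, c)"] by simp
      then show ?thesis
        using False \<xi> by simp
    qed (use e in simp)
  qed
qed

lemma implicit_DERIV:
  fixes R Ru :: "real \<Rightarrow> real \<Rightarrow> real" and u :: "real \<Rightarrow> real"
  assumes d: "d > 0"
    and der: "\<And>v c. \<bar>v - u0\<bar> < d \<Longrightarrow> \<bar>c - c0\<bar> < d \<Longrightarrow> ((\<lambda>v. R v c) has_real_derivative Ru v c) (at v)"
    and cont: "isCont (\<lambda>x. Ru (fst x) (snd x)) (u0, c0)"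
    and u: "(u \<longlongrightarrow> u0) (at c0)" "u c0 = u0"
    and root: "eventually (\<lambda>c. R (u c) c = 0) (at c0)" "R u0 c0 = 0"
    and Rc: "((\<lambda>c. R u0 c) has_real_derivative Rc) (at c0)"
    and Ru: "Ru u0 c0 \<noteq> 0"
  shows "(u has_real_derivative - Rc / Ru u0 c0) (at c0)"
proof -
  define G where "G c = (if u c = u0 then Ru u0 c0 else (R (u c) c - R u0 c) / (u c - u0))" for c
  have G: "(G \<longlongrightarrow> Ru u0 c0) (at c0)"
    unfolding G_def using d der cont u(1) by (rule tendsto_partial_difference_quotient)
  have G_ne: "eventually (\<lambda>c. G c \<noteq> 0) (at c0)"
    using G Ru tendsto_imp_eventually_ne by blast
  have "((\<lambda>c. (R u0 c - R u0 c0) / (c - c0)) \<longlongrightarrow> Rc) (at c0)"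
    using Rc by (simp add: has_field_derivative_iff)
  then have "((\<lambda>c. - ((R u0 c - R u0 c0) / (c - c0)) / G c) \<longlongrightarrow> - Rc / Ru u0 c0) (at c0)"
    by (intro tendsto_intros G Ru)
  moreover have "eventually (\<lambda>c. - ((R u0 c - R u0 c0) / (c - c0)) / G c = (u c - u c0) / (c - c0)) (at c0)"
    using root(1) G_ne
  proof eventually_elim
    case (elim c)
    have "R (u c) c - R u0 c = G c * (u c - u0)"
      by (simp add: G_def)
    then have "R u0 c = - (G c * (u c - u0))"
      using elim(1) by simp
    then show ?case
      using elim root(2) u(2) by (simp add: divide_simps)
  qed
  ultimately have "((\<lambda>c. (u c - u c0) / (c - c0)) \<longlongrightarrow> - Rc / Ru u0 c0) (at c0)"
    by (rule Lim_transform_eventually)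
  then show ?thesis
    by (simp add: has_field_derivative_iff)
qed

lemma DERIV_compose_partial:
  fixes F Fu :: "real \<Rightarrow> real \<Rightarrow> real" and u :: "real \<Rightarrow> real"
  assumes d: "d > 0"
    and der: "\<And>v c. \<bar>v - u0\<bar> < d \<Longrightarrow> \<bar>c - c0\<bar> < d \<Longrightarrow> ((\<lambda>v. F v c) has_real_derivative Fu v c) (at v)"
    and cont: "isCont (\<lambda>x. Fu (fst x) (snd x)) (u0, c0)"
    and u: "(u has_real_derivative u') (at c0)" "u c0 = u0"
    and Fc: "((\<lambda>c. F u0 c) has_real_derivative Fc) (at c0)"
  shows "((\<lambda>c. F (u c) c) has_real_derivative Fu u0 c0 * u' + Fc) (at c0)"
proof -
  define G where "G c = (if u c = u0 then Fu u0 c0 else (F (u c) c - F u0 c) / (u c - u0))" for c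
  have "(u \<longlongrightarrow> u0) (at c0)"
    using DERIV_isCont[OF u(1)] u(2) by (simp add: isCont_def)
  then have "(G \<longlongrightarrow> Fu u0 c0) (at c0)"
    unfolding G_def using d der cont by (intro tendsto_partial_difference_quotient)
  moreover have "((\<lambda>c. (u c - u0) / (c - c0)) \<longlongrightarrow> u') (at c0)"
    using u by (simp add: has_field_derivative_iff)
  moreover have "((\<lambda>c. (F u0 c - F u0 c0) / (c - c0)) \<longlongrightarrow> Fc) (at c0)"
    using Fc by (simp add: has_field_derivative_iff)
  ultimately have "((\<lambda>c. G c * ((u c - u0) / (c - c0)) + (F u0 c - F u0 c0) / (c - c0))
      \<longlongrightarrow> Fu u0 c0 * u' + Fc) (at c0)"
    by (intro tendsto_intros)
  moreover have "G c * ((u c - u0) / (c - c0)) + (F u0 c - F u0 c0) / (c - c0)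
      = (F (u c) c - F (u c0) c0) / (c - c0)" for c
    using u(2) by (simp add: G_def divide_simps)
  ultimately show ?thesis
    by (simp add: has_field_derivative_iff)
qed

lemma tendsto_implicit_root:
  fixes R :: "real \<Rightarrow> real \<Rightarrow> real" and u :: "real \<Rightarrow> real"
  assumes mono: "eventually (\<lambda>c. strict_mono_on {0<..} (\<lambda>v. R v c)) (nhds c0)"
    and cont: "\<And>v. v > 0 \<Longrightarrow> isCont (R v) c0"
    and root: "eventually (\<lambda>c. 0 < u c \<and> R (u c) c = 0) (at c0)"
    and root0: "0 < u0" "R u0 c0 = 0"
  shows "(u \<longlongrightarrow> u0) (at c0)"
proof (rule tendstoI)
  fix \<epsilon> :: real
  assume "\<epsilon> > 0"
  define r where "r = min \<epsilon> (u0 / 2)"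
  have r: "0 < r" "r \<le> \<epsilon>" "r < u0"
    using \<open>\<epsilon> > 0\<close> root0 by (auto simp: r_def)
  have mono0: "strict_mono_on {0<..} (\<lambda>v. R v c0)"
    using mono by (rule eventually_nhds_x_imp_x)
  have "R (u0 - r) c0 < R u0 c0" "R u0 c0 < R (u0 + r) c0"
    by (rule strict_mono_onD[OF mono0]; use r in simp)+
  then have "R (u0 - r) c0 < 0" "0 < R (u0 + r) c0"
    using root0 by simp_all
  then have "eventually (\<lambda>c. R (u0 - r) c < 0) (at c0)" "eventually (\<lambda>c. 0 < R (u0 + r) c) (at c0)"
    using cont[of "u0 - r"] cont[of "u0 + r"] r root0
    by (auto simp: isCont_def order_tendstoD)
  moreover have "eventually (\<lambda>c. strict_mono_on {0<..} (\<lambda>v. R v c)) (at c0)"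
    using mono by (auto simp: eventually_at_filter elim: eventually_mono)
  ultimately show "eventually (\<lambda>c. dist (u c) u0 < \<epsilon>) (at c0)"
    using root
  proof eventually_elim
    case (elim c)
    have "\<not> u c \<le> u0 - r"
      using elim r strict_mono_on_leD[OF elim(3), of "u c" "u0 - r"] by auto
    moreover have "\<not> u0 + r \<le> u c"
      using elim r root0 strict_mono_on_leD[OF elim(3), of "u0 + r" "u c"] by auto
    ultimately show ?case
      using r by (simp add: dist_real_def abs_less_iff)
  qed
qed

section \<open>The standard normal distribution\<close>

abbreviation \<phi> :: "real \<Rightarrow> real" where "\<phi> \<equiv> std_normal_density"
abbreviation \<Phi> :: "real \<Rightarrow> real" where "\<Phi> \<equiv> cdf N01"

lemma std_normal_density_pos: "0 < \<phi> x"
  by (simp add: std_normal_density_def)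

lemma std_normal_density_minus [simp]: "\<phi> (- x) = \<phi> x"
  by (simp add: std_normal_density_def)

lemma std_normal_density_le_1: "\<phi> x \<le> 1"
proof -
  have "\<phi> x \<le> 1 / sqrt (2 * pi)"
    by (simp add: std_normal_density_def divide_right_mono)
  also have "\<dots> \<le> 1"
    using pi_gt3 by (simp add: real_le_rsqrt)
  finally show ?thesis .
qed

lemma std_normal_density_antimono: "x\<^sup>2 \<le> y\<^sup>2 \<Longrightarrow> \<phi> y \<le> \<phi> x"
  by (simp add: std_normal_density_def divide_right_mono)

lemma abs_std_normal_density_diff_le: "\<bar>\<phi> x - \<phi> y\<bar> \<le> 1"
  using std_normal_density_le_1[of x] std_normal_density_le_1[of y]
    std_normal_density_pos[of x] std_normal_density_pos[of y]
  by linarith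

lemma abs_std_normal_density_sum_le: "\<bar>\<phi> x + \<phi> y\<bar> \<le> 2"
  using std_normal_density_le_1[of x] std_normal_density_le_1[of y]
    std_normal_density_pos[of x] std_normal_density_pos[of y]
  by linarith

lemma abs_weighted_std_normal_density_diff_le: "\<bar>b * (\<phi> x - \<phi> y)\<bar> \<le> 1 + b\<^sup>2"
proof -
  have "\<bar>b\<bar> * \<bar>\<phi> x - \<phi> y\<bar> \<le> \<bar>b\<bar>"
    using abs_std_normal_density_diff_le by (rule mult_left_le) simp
  also have "\<bar>b\<bar> \<le> 1 + b\<^sup>2"
    using zero_le_power2[of "\<bar>b\<bar> - 1"] by (simp add: power2_eq_square algebra_simps abs_mult_self_eq)
  finally show ?thesis
    by (simp add: abs_mult)
qed

lemma DERIV_std_normal_density [derivative_intros]: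
  "(f has_real_derivative f') (at x within s) \<Longrightarrow>
   ((\<lambda>x. \<phi> (f x)) has_real_derivative - f x * \<phi> (f x) * f') (at x within s)"
  unfolding std_normal_density_def
  by (auto intro!: derivative_eq_intros simp: field_simps power2_eq_square)

lemma continuous_std_normal_density [continuous_intros]:
  "isCont f x \<Longrightarrow> isCont (\<lambda>x. \<phi> (f x)) x"
  "continuous_on s f \<Longrightarrow> continuous_on s (\<lambda>x. \<phi> (f x))"
  unfolding std_normal_density_def by (auto intro!: continuous_intros)

lemma std_normal_density_times_affine_tendsto_0:
  "((\<lambda>z. (a * z + b) * \<phi> z) \<longlongrightarrow> 0) at_top"
  "((\<lambda>z. (a * z + b) * \<phi> z) \<longlongrightarrow> 0) at_bot"
  unfolding std_normal_density_def by real_asymp+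

lemma real_distribution_N01: "real_distribution N01"
proof -
  have "prob_space N01"
    unfolding N01_def using prob_space_normal_density[of 1 0] by simp
  then show ?thesis
    by (simp add: real_distribution_def real_distribution_axioms_def N01_def)
qed

interpretation N01: real_distribution N01
  by (rule real_distribution_N01)

lemma measure_N01: "A \<in> sets borel \<Longrightarrow> measure N01 A = (LBINT x:A. \<phi> x)"
proof -
  assume A: "A \<in> sets borel"
  have "measure N01 A = integral\<^sup>L N01 (indicator A)"
    using A by simp
  also have "\<dots> = (\<integral>x. \<phi> x * indicator A x \<partial>lborel)"
    unfolding N01_def using A by (subst integral_density) auto
  finally show ?thesis
    by (simp add: set_lebesgue_integral_def mult.commute)
qed

lemma integral_N01:
  "f \<in> borel_measurable borel \<Longrightarrow> integral\<^sup>L N01 f = (\<integral>x. \<phi> x * f x \<partial>lborel)"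
  unfolding N01_def by (subst integral_density) auto

lemma integral_N01_sq: "(\<integral>z. z\<^sup>2 \<partial>N01) = 1"
  using integral_std_normal_moment_even[of 1] by (simp add: integral_N01)

lemma integrable_N01_sq: "integrable N01 (\<lambda>z. z\<^sup>2)"
  unfolding N01_def using integrable_std_normal_moment[of 2] by (subst integrable_density) auto

lemma DERIV_std_normal_cdf: "(\<Phi> has_real_derivative \<phi> x) (at x)"
proof -
  let ?c = "x - 1" and ?d = "x + 1"
  have "((\<lambda>u. LBINT t=?c..u. \<phi> t) has_vector_derivative \<phi> x) (at x within {?c..?d})"
    by (rule interval_integral_FTC2) (auto intro!: continuous_intros)
  then have "((\<lambda>u. LBINT t=?c..u. \<phi> t) has_vector_derivative \<phi> x) (at x within {?c<..<?d})"
    by (rule has_vector_derivative_within_subset) auto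
  then have "((\<lambda>u. LBINT t=?c..u. \<phi> t) has_vector_derivative \<phi> x) (at x)"
    by (subst (asm) has_vector_derivative_within_open) auto
  then have "((\<lambda>u. \<Phi> ?c + (LBINT t=?c..u. \<phi> t)) has_real_derivative \<phi> x) (at x)"
    by (auto simp: has_real_derivative_iff_has_vector_derivative intro!: derivative_eq_intros)
  then show ?thesis
  proof (rule has_field_derivative_transform_within_open[where S="{?c<..<?d}"])
    fix u assume "u \<in> {?c<..<?d}"
    then have "\<Phi> u - \<Phi> ?c = measure N01 {?c<..u}"
      by (intro N01.cdf_diff_eq) auto
    then show "\<Phi> ?c + (LBINT t=?c..u. \<phi> t) = \<Phi> u"
      using \<open>u \<in> _\<close> by (simp add: measure_N01 interval_integral_Ioc)
  qed auto
qed

lemma DERIV_std_normal_cdf_compose [derivative_intros]: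
  "(f has_real_derivative f') (at x within s) \<Longrightarrow>
   ((\<lambda>x. \<Phi> (f x)) has_real_derivative \<phi> (f x) * f') (at x within s)"
  using DERIV_chain2[OF DERIV_std_normal_cdf] by blast

lemma continuous_std_normal_cdf [continuous_intros]:
  "isCont f x \<Longrightarrow> isCont (\<lambda>x. \<Phi> (f x)) x"
  "continuous_on s f \<Longrightarrow> continuous_on s (\<lambda>x. \<Phi> (f x))"
  using DERIV_isCont[OF DERIV_std_normal_cdf]
  by (auto intro: continuous_on_compose2[of UNIV \<Phi>] continuous_at_imp_continuous_on isCont_o2)

lemma std_normal_cdf_minus: "\<Phi> (- x) = 1 - \<Phi> x"
proof -
  have "\<forall>y. ((\<lambda>x. \<Phi> x + \<Phi> (- x)) has_real_derivative 0) (at y)"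
    by (auto intro!: derivative_eq_intros)
  then have "(\<lambda>y. \<Phi> y + \<Phi> (- y)) = (\<lambda>_. \<Phi> x + \<Phi> (- x))"
    by (intro ext DERIV_isconst_all)
  moreover have "((\<lambda>y. \<Phi> y + \<Phi> (- y)) \<longlongrightarrow> 1 + 0) at_top"
    by (intro tendsto_add N01.cdf_lim_at_top_prob filterlim_compose[OF N01.cdf_lim_at_bot]
        filterlim_uminus_at_bot_at_top)
  ultimately show ?thesis
    by (simp add: tendsto_const_iff)
qed

lemma std_normal_cdf_reflect:
  "\<Phi> (c - a) = 1 - \<Phi> (a - c)" "\<Phi> (- c - a) = 1 - \<Phi> (a + c)"
proof -
  show "\<Phi> (c - a) = 1 - \<Phi> (a - c)"
    using std_normal_cdf_minus[of "a - c"] by simp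
  have "\<Phi> (- c - a) = \<Phi> (- (a + c))"
    by (rule arg_cong[where f = \<Phi>]) linarith
  also have "\<dots> = 1 - \<Phi> (a + c)"
    by (rule std_normal_cdf_minus)
  finally show "\<Phi> (- c - a) = 1 - \<Phi> (a + c)" .
qed

lemma std_normal_density_reflect:
  "\<phi> (c - a) = \<phi> (a - c)" "\<phi> (- c - a) = \<phi> (a + c)"
proof -
  show "\<phi> (c - a) = \<phi> (a - c)"
    using std_normal_density_minus[of "a - c"] by simp
  have "\<phi> (- c - a) = \<phi> (- (a + c))"
    by (rule arg_cong[where f = \<phi>]) linarith
  then show "\<phi> (- c - a) = \<phi> (a + c)"
    by (simp only: std_normal_density_minus)
qed

lemma std_normal_cdf_diff_nonneg: "c \<ge> 0 \<Longrightarrow> 0 \<le> \<Phi> (a + c) - \<Phi> (a - c)"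
  using N01.cdf_nondecreasing[of "a - c" "a + c"] by simp

lemma abs_std_normal_cdf_diff_le: "\<bar>\<Phi> x - \<Phi> y\<bar> \<le> 1"
  using N01.cdf_nonneg[of x] N01.cdf_bounded_prob[of x] N01.cdf_nonneg[of y] N01.cdf_bounded_prob[of y]
  by linarith

lemma measure_N01_Ioi: "measure N01 {t<..} = 1 - \<Phi> t"
  using N01.prob_compl[of "{..t}"] by (simp add: cdf_def Compl_eq_Diff_UNIV[symmetric])

lemma measure_N01_Iio: "measure N01 {..<s} = \<Phi> s"
proof -
  have "measure N01 {s} = 0"
    using N01.isCont_cdf DERIV_isCont[OF DERIV_std_normal_cdf] by blast
  moreover have "{..s} = {..<s} \<union> {s}"
    by auto
  ultimately show ?thesis
    using N01.finite_measure_Union[of "{..<s}" "{s}"] by (simp add: cdf_def)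
qed

lemma measure_N01_Icc: "s \<le> t \<Longrightarrow> measure N01 {s..t} = \<Phi> t - \<Phi> s"
proof -
  assume "s \<le> t"
  then have "{..t} = {..<s} \<union> {s..t}"
    by auto
  then have "\<Phi> t = measure N01 ({..<s} \<union> {s..t})"
    by (simp add: cdf_def)
  also have "\<dots> = measure N01 {..<s} + measure N01 {s..t}"
    by (rule N01.finite_measure_Union) auto
  finally show ?thesis
    by (simp add: measure_N01_Iio)
qed

lemma integrable_std_normal_density_times_sq: "integrable lborel (\<lambda>z. \<phi> z * (z + b)\<^sup>2)"
proof -
  have "integrable lborel (\<lambda>z. \<phi> z * z ^ 2 + 2 * b * (\<phi> z * z ^ 1) + b\<^sup>2 * (\<phi> z * z ^ 0))"
    by (intro Bochner_Integration.integrable_add integrable_mult_right integrable_std_normal_moment)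
  then show ?thesis
    by (simp add: algebra_simps power2_eq_square)
qed

lemma set_integral_upper_tail_std_normal_sq:
  "(LBINT z:{t<..}. \<phi> z * (z - c)\<^sup>2) = (1 + c\<^sup>2) * (1 - \<Phi> t) + (t - 2 * c) * \<phi> t"
proof -
  let ?F = "\<lambda>z. - ((1 + c\<^sup>2) * (1 - \<Phi> z) + (1 * z + - 2 * c) * \<phi> z)"
  have "(LBINT z:{t<..}. \<phi> z * (z - c)\<^sup>2) = - ((1 + c\<^sup>2) * (1 - 1) + 0) - ?F t"
  proof (rule set_integral_Ioi_FTC)
    show "(?F has_real_derivative \<phi> x * (x - c)\<^sup>2) (at x)" for x
      by (auto intro!: derivative_eq_intros simp: algebra_simps power2_eq_square)
    show "integrable lborel (\<lambda>z. \<phi> z * (z - c)\<^sup>2)"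
      using integrable_std_normal_density_times_sq[of "- c"] by simp
    show "(?F \<longlongrightarrow> - ((1 + c\<^sup>2) * (1 - 1) + 0)) at_top"
      by (intro tendsto_intros N01.cdf_lim_at_top_prob std_normal_density_times_affine_tendsto_0)
  qed (intro continuous_intros)
  then show ?thesis
    by simp
qed

lemma set_integral_lower_tail_std_normal_sq:
  "(LBINT z:{..<s}. \<phi> z * (z + c)\<^sup>2) = (1 + c\<^sup>2) * \<Phi> s - (s + 2 * c) * \<phi> s"
proof -
  let ?F = "\<lambda>z. (1 + c\<^sup>2) * \<Phi> z - (1 * z + 2 * c) * \<phi> z"
  have "(LBINT z:{..<s}. \<phi> z * (z + c)\<^sup>2) = ?F s - ((1 + c\<^sup>2) * 0 - 0)"
  proof (rule set_integral_Iio_FTC)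
    show "(?F has_real_derivative \<phi> x * (x + c)\<^sup>2) (at x)" for x
      by (auto intro!: derivative_eq_intros simp: algebra_simps power2_eq_square)
    show "integrable lborel (\<lambda>z. \<phi> z * (z + c)\<^sup>2)"
      by (rule integrable_std_normal_density_times_sq)
    show "(?F \<longlongrightarrow> (1 + c\<^sup>2) * 0 - 0) at_bot"
      by (intro tendsto_intros N01.cdf_lim_at_bot std_normal_density_times_affine_tendsto_0)
  qed (intro continuous_intros)
  then show ?thesis
    by simp
qed

lemma std_normal_density_diff_bounds_nonneg:
  assumes a: "a \<ge> 0" and c: "c \<ge> 0"
  shows "0 \<le> a * (\<phi> (a - c) - \<phi> (a + c)) \<and>
    a * (\<phi> (a - c) - \<phi> (a + c)) \<le> a\<^sup>2 * (\<Phi> (a + c) - \<Phi> (a - c))"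
proof -
  have sq: "(a - t)\<^sup>2 \<le> (a + t)\<^sup>2" if "t \<ge> 0" for t
    using a that by (simp add: power2_eq_square algebra_simps)
  define F where "F t = a * (\<Phi> (a + t) - \<Phi> (a - t)) - (\<phi> (a - t) - \<phi> (a + t))" for t
  have "F 0 \<le> F c"
  proof (rule DERIV_nonneg_imp_nondecreasing[OF c])
    fix t
    assume "0 \<le> t" "t \<le> c"
    then have "0 \<le> t * (\<phi> (a - t) - \<phi> (a + t))"
      using std_normal_density_antimono[OF sq] by simp
    moreover have "(F has_real_derivative t * (\<phi> (a - t) - \<phi> (a + t))) (at t)"
      unfolding F_def by (auto intro!: derivative_eq_intros simp: algebra_simps)
    ultimately show "\<exists>y. (F has_real_derivative y) (at t) \<and> 0 \<le> y"
      by blast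
  qed
  then have "0 \<le> a * F c"
    using a by (simp add: F_def)
  moreover have "0 \<le> a * (\<phi> (a - c) - \<phi> (a + c))"
    using std_normal_density_antimono[OF sq[OF c]] a by simp
  ultimately show ?thesis
    by (simp add: F_def power2_eq_square algebra_simps)
qed

lemma std_normal_density_diff_bounds:
  assumes c: "c \<ge> 0"
  shows "0 \<le> a * (\<phi> (a - c) - \<phi> (a + c))"
    and "a * (\<phi> (a - c) - \<phi> (a + c)) \<le> a\<^sup>2 * (\<Phi> (a + c) - \<Phi> (a - c))"
proof -
  have "- a * (\<phi> (- a - c) - \<phi> (- a + c)) = a * (\<phi> (a - c) - \<phi> (a + c))"
    using std_normal_density_reflect[of c a] std_normal_density_reflect[of a c]
    by (simp add: algebra_simps)
  moreover have "\<Phi> (- a + c) - \<Phi> (- a - c) = \<Phi> (a + c) - \<Phi> (a - c)"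
    using std_normal_cdf_reflect[of c a] std_normal_cdf_reflect[of a c] by (simp add: algebra_simps)
  ultimately show "0 \<le> a * (\<phi> (a - c) - \<phi> (a + c))"
    and "a * (\<phi> (a - c) - \<phi> (a + c)) \<le> a\<^sup>2 * (\<Phi> (a + c) - \<Phi> (a - c))"
    using std_normal_density_diff_bounds_nonneg[OF _ c, of a]
      std_normal_density_diff_bounds_nonneg[OF _ c, of "- a"]
    by (cases "a \<ge> 0"; simp)+
qed

section \<open>Soft thresholding of a Gaussian observation\<close>

lemma borel_measurable_soft_thresh [measurable]:
  "f \<in> borel_measurable M \<Longrightarrow> g \<in> borel_measurable M \<Longrightarrow>
   (\<lambda>x. soft_thresh (f x) (g x)) \<in> borel_measurable M"
proof -
  assume [measurable]: "f \<in> borel_measurable M" "g \<in> borel_measurable M"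
  have [measurable]: "(\<lambda>x. sgn (f x)) \<in> borel_measurable M"
    by (rule measurable_compose[OF _ borel_measurable_sgn]) simp
  show ?thesis
    unfolding soft_thresh_def by measurable
qed

lemma soft_thresh_scale: "s > 0 \<Longrightarrow> soft_thresh (s * x) (s * c) = s * soft_thresh x c"
  by (simp add: soft_thresh_def abs_mult sgn_mult max_mult_distrib_left right_diff_distrib)

lemma soft_thresh_nonzero_iff: "\<tau> \<ge> 0 \<Longrightarrow> soft_thresh x \<tau> \<noteq> 0 \<longleftrightarrow> \<tau> < \<bar>x\<bar>"
  by (auto simp: soft_thresh_def sgn_if max_def abs_if)

lemma abs_soft_thresh_diff_le: "\<tau> \<ge> 0 \<Longrightarrow> \<bar>soft_thresh x \<tau> - x\<bar> \<le> \<tau>"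
  by (auto simp: soft_thresh_def sgn_if max_def abs_if)

lemma soft_thresh_residual_sq_le:
  assumes "c \<ge> 0"
  shows "(soft_thresh (a + z) c - a)\<^sup>2 \<le> 2 * c\<^sup>2 + 2 * z\<^sup>2"
proof -
  have "\<bar>soft_thresh (a + z) c - a\<bar> \<le> c + \<bar>z\<bar>"
    using abs_soft_thresh_diff_le[OF assms, of "a + z"] by linarith
  then have "(soft_thresh (a + z) c - a)\<^sup>2 \<le> (c + \<bar>z\<bar>)\<^sup>2"
    by (metis abs_le_square_iff abs_of_nonneg add_nonneg_nonneg abs_ge_zero assms power2_abs)
  also have "\<dots> \<le> 2 * c\<^sup>2 + 2 * z\<^sup>2"
    using zero_le_power2[of "c - \<bar>z\<bar>"] by (simp add: power2_eq_square algebra_simps)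
  finally show ?thesis .
qed

lemma soft_thresh_residual_sq:
  assumes "c \<ge> 0"
  shows "(soft_thresh (a + z) c - a)\<^sup>2 =
    indicator {c - a<..} z * (z - c)\<^sup>2 + indicator {..< - c - a} z * (z + c)\<^sup>2
    + indicator {- c - a..c - a} z * a\<^sup>2"
  using assms
  by (auto simp: soft_thresh_def indicator_def sgn_if abs_if max_def power2_eq_square algebra_simps)

lemma soft_thresh_residual_sq_rescale:
  assumes "s > 0"
  shows "(soft_thresh (b + s * z) (c * s) - b)\<^sup>2 = s\<^sup>2 * (soft_thresh (b / s + z) c - b / s)\<^sup>2"
proof -
  have "soft_thresh (b + s * z) (c * s) = s * soft_thresh (b / s + z) c"
    using soft_thresh_scale[OF assms, of "b / s + z" c] assms by (simp add: algebra_simps)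
  then show ?thesis
    using assms by (simp add: power2_eq_square field_simps)
qed

definition exceed_prob :: "real \<Rightarrow> real \<Rightarrow> real" where
  "exceed_prob a c = \<Phi> (a - c) + (1 - \<Phi> (a + c))"

definition soft_thresh_risk :: "real \<Rightarrow> real \<Rightarrow> real" where
  "soft_thresh_risk a c = (1 + c\<^sup>2) * exceed_prob a c - (a + c) * \<phi> (a - c)
     + (a - c) * \<phi> (a + c) + a\<^sup>2 * (\<Phi> (a + c) - \<Phi> (a - c))"

lemma measure_N01_exceed:
  assumes "c \<ge> 0"
  shows "measure N01 {z. c < \<bar>a + z\<bar>} = exceed_prob a c"
proof -
  have "{z. c < \<bar>a + z\<bar>} = {c - a<..} \<union> {..< - c - a}"
    by auto
  then have "measure N01 {z. c < \<bar>a + z\<bar>} = measure N01 ({c - a<..} \<union> {..< - c - a})"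
    by simp
  also have "\<dots> = measure N01 {c - a<..} + measure N01 {..< - c - a}"
    using assms by (intro N01.finite_measure_Union) auto
  finally show ?thesis
    by (simp add: measure_N01_Ioi measure_N01_Iio std_normal_cdf_reflect[of c a] exceed_prob_def)
qed

lemma integral_N01_soft_thresh_residual_sq:
  assumes "c \<ge> 0"
  shows "(\<integral>z. (soft_thresh (a + z) c - a)\<^sup>2 \<partial>N01) = soft_thresh_risk a c"
proof -
  let ?I = "\<lambda>A. indicator A :: real \<Rightarrow> real"
  have split: "\<phi> z * (soft_thresh (a + z) c - a)\<^sup>2 =
      ?I {c - a<..} z * (\<phi> z * (z - c)\<^sup>2) + ?I {..< - c - a} z * (\<phi> z * (z + c)\<^sup>2)
      + a\<^sup>2 * (?I {- c - a..c - a} z * \<phi> z)" for z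
    by (simp only: soft_thresh_residual_sq[OF assms]) (simp add: algebra_simps)
  have "(\<integral>z. (soft_thresh (a + z) c - a)\<^sup>2 \<partial>N01) = (\<integral>z. \<phi> z * (soft_thresh (a + z) c - a)\<^sup>2 \<partial>lborel)"
    by (simp add: integral_N01)
  also have "\<dots> = (LBINT z:{c - a<..}. \<phi> z * (z - c)\<^sup>2) + (LBINT z:{..< - c - a}. \<phi> z * (z + c)\<^sup>2)
      + a\<^sup>2 * (LBINT z:{- c - a..c - a}. \<phi> z)"
  proof -
    have tail: "integrable lborel (\<lambda>z. ?I A z * (\<phi> z * (z + b)\<^sup>2))" if "A \<in> sets borel" for A b
      using integrable_mult_indicator[OF _ integrable_std_normal_density_times_sq[of b], of A] that
      by simp
    have "integrable lborel (\<lambda>z. ?I {- c - a..c - a} z * \<phi> z)"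
      using integrable_mult_indicator[of "{- c - a..c - a}" lborel \<phi>] by simp
    with tail[of _ "- c"] tail[of _ c] show ?thesis
      unfolding split by (simp add: set_lebesgue_integral_def)
  qed
  also have "\<dots> = soft_thresh_risk a c"
    using assms
    by (simp add: set_integral_upper_tail_std_normal_sq set_integral_lower_tail_std_normal_sq
        measure_N01[symmetric] measure_N01_Icc std_normal_cdf_reflect[of c a]
        std_normal_density_reflect[of c a] soft_thresh_risk_def
        exceed_prob_def algebra_simps)
  finally show ?thesis .
qed

lemma integrable_N01_soft_thresh_residual_sq:
  assumes "c \<ge> 0"
  shows "integrable N01 (\<lambda>z. (soft_thresh (a + z) c - a)\<^sup>2)"
proof (rule Bochner_Integration.integrable_bound)
  show "integrable N01 (\<lambda>z. 2 * c\<^sup>2 + 2 * z\<^sup>2)"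
    using integrable_N01_sq by simp
  show "AE z in N01. norm ((soft_thresh (a + z) c - a)\<^sup>2) \<le> norm (2 * c\<^sup>2 + 2 * z\<^sup>2)"
    using soft_thresh_residual_sq_le[OF assms] by auto
qed simp

lemma soft_thresh_risk_bounds:
  assumes "c \<ge> 0"
  shows "0 \<le> soft_thresh_risk a c" "soft_thresh_risk a c \<le> 2 * c\<^sup>2 + 2"
proof -
  show "0 \<le> soft_thresh_risk a c"
    unfolding integral_N01_soft_thresh_residual_sq[OF assms, symmetric]
    by (intro integral_nonneg_AE AE_I2) simp
  have "soft_thresh_risk a c \<le> (\<integral>z. 2 * c\<^sup>2 + 2 * z\<^sup>2 \<partial>N01)"
    unfolding integral_N01_soft_thresh_residual_sq[OF assms, symmetric]
    using integrable_N01_soft_thresh_residual_sq[OF assms] integrable_N01_sq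
    by (intro integral_mono soft_thresh_residual_sq_le[OF assms]) auto
  also have "\<dots> = 2 * c\<^sup>2 + 2"
    using integrable_N01_sq by (simp add: integral_N01_sq N01.prob_space[unfolded N01.space_eq_univ])
  finally show "soft_thresh_risk a c \<le> 2 * c\<^sup>2 + 2" .
qed

lemma exceed_prob_bounds: "0 \<le> exceed_prob a c" "exceed_prob a c \<le> 2"
  unfolding exceed_prob_def
  using N01.cdf_nonneg[of "a - c"] N01.cdf_bounded_prob[of "a + c"] N01.cdf_bounded_prob[of "a - c"]
    N01.cdf_nonneg[of "a + c"]
  by linarith+

lemma continuous_exceed_prob [continuous_intros]:
  "isCont f x \<Longrightarrow> isCont g x \<Longrightarrow> isCont (\<lambda>x. exceed_prob (f x) (g x)) x"
  "continuous_on s f \<Longrightarrow> continuous_on s g \<Longrightarrow> continuous_on s (\<lambda>x. exceed_prob (f x) (g x))"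
  unfolding exceed_prob_def by (auto intro!: continuous_intros)

lemma continuous_soft_thresh_risk [continuous_intros]:
  "isCont f x \<Longrightarrow> isCont g x \<Longrightarrow> isCont (\<lambda>x. soft_thresh_risk (f x) (g x)) x"
  "continuous_on s f \<Longrightarrow> continuous_on s g \<Longrightarrow>
   continuous_on s (\<lambda>x. soft_thresh_risk (f x) (g x))"
  unfolding soft_thresh_risk_def by (auto intro!: continuous_intros)

lemma DERIV_exceed_prob_fst:
  "((\<lambda>a. exceed_prob a c) has_real_derivative \<phi> (a - c) - \<phi> (a + c)) (at a)"
  unfolding exceed_prob_def by (auto intro!: derivative_eq_intros)

lemma DERIV_exceed_prob_snd:
  "((\<lambda>c. exceed_prob a c) has_real_derivative - (\<phi> (a - c) + \<phi> (a + c))) (at c)"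
  unfolding exceed_prob_def by (auto intro!: derivative_eq_intros)

lemma DERIV_soft_thresh_risk_fst:
  "((\<lambda>a. soft_thresh_risk a c) has_real_derivative 2 * a * (\<Phi> (a + c) - \<Phi> (a - c))) (at a)"
  unfolding soft_thresh_risk_def exceed_prob_def
  by (auto intro!: derivative_eq_intros simp: algebra_simps power2_eq_square)

lemma DERIV_soft_thresh_risk_snd:
  "((\<lambda>c. soft_thresh_risk a c) has_real_derivative
     2 * c * exceed_prob a c - 2 * (\<phi> (a - c) + \<phi> (a + c))) (at c)"
  unfolding soft_thresh_risk_def exceed_prob_def
  by (auto intro!: derivative_eq_intros simp: algebra_simps power2_eq_square)

section \<open>Averages over the prior\<close>

text \<open>The parameter \<open>v\<close> stands for \<open>1 / \<sigma>\<close>, cf. \<open>E_BZ_soft_thresh_residual_sq\<close>.\<close>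

definition avg_soft_thresh_risk :: "real measure \<Rightarrow> real \<Rightarrow> real \<Rightarrow> real" where
  "avg_soft_thresh_risk p v c = (\<integral>b. soft_thresh_risk (v * b) c \<partial>p)"

definition avg_exceed_prob :: "real measure \<Rightarrow> real \<Rightarrow> real \<Rightarrow> real" where
  "avg_exceed_prob p v c = (\<integral>b. exceed_prob (v * b) c \<partial>p)"

text \<open>
  With \<open>K = \<delta> s + S\<close> the left-hand side is \<open>A (E - c Q) / (u K) - E\<close>, and \<open>A \<le> u S < u K\<close>.
\<close>

lemma implicit_derivative_sign:
  fixes \<delta> s u c A S E Q :: real
  assumes "0 < \<delta>" "0 < s" "0 < u" "0 < c"
    and A: "0 \<le> A" "A \<le> u * S" and "0 \<le> S" "0 < E" "0 \<le> Q"
  shows "A * (- ((2 * c * Q - 2 * E) / \<delta>) / (2 * s * u + 2 * u * S / \<delta>)) - E < 0"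
proof -
  define K where "K = \<delta> * s + S"
  have K: "0 < K" "A < u * K"
    using assms by (auto simp: K_def add_pos_nonneg intro: le_less_trans)
  have "2 * s * u + 2 * u * S / \<delta> = 2 * u * K / \<delta>" "- ((2 * c * Q - 2 * E) / \<delta>) = 2 * (E - c * Q) / \<delta>"
    using assms by (simp_all add: K_def field_simps)
  then have "A * (- ((2 * c * Q - 2 * E) / \<delta>) / (2 * s * u + 2 * u * S / \<delta>))
      = A * (E - c * Q) / (u * K)"
    using assms K by (simp add: divide_simps)
  also have "\<dots> < E"
  proof (cases "E - c * Q \<le> 0")
    case True
    then have "A * (E - c * Q) \<le> 0"
      using A by (simp add: mult_nonneg_nonpos)
    then show ?thesis
      using assms K by (smt (verit) divide_nonpos_pos mult_pos_pos)
  next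
    case False
    then have "A * (E - c * Q) < u * K * (E - c * Q)"
      using K by simp
    then have "A * (E - c * Q) / (u * K) < E - c * Q"
      using assms K by (simp add: pos_divide_less_eq mult.commute)
    then show ?thesis
      using assms by (smt (verit) mult_nonneg_nonneg)
  qed
  finally show ?thesis
    by simp
qed

context
  fixes p :: "real measure"
  assumes prob: "prob_space p" and sets_p [measurable_cong]: "sets p = sets borel"
begin

interpretation prior: prob_space p
  by (rule prob)

lemma pair_prob_space_N01: "pair_prob_space p N01"
  by (simp add: pair_prob_space_def pair_sigma_finite_def prob N01.prob_space_axioms
      prob_space_imp_sigma_finite)

lemma space_p [simp]: "space p = UNIV"
  using sets_eq_imp_space_eq[OF sets_p] by simp

lemma borel_measurable_p_continuous: "continuous_on UNIV f \<Longrightarrow> f \<in> borel_measurable p"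
  using borel_measurable_continuous_onI measurable_cong_sets[OF sets_p refl] by blast

lemma integrable_p_bounded:
  fixes f :: "real \<Rightarrow> real"
  assumes "continuous_on UNIV f" "\<And>b. \<bar>f b\<bar> \<le> B"
  shows "integrable p f"
  using assms by (intro prior.integrable_const_bound[where B = B] AE_I2 borel_measurable_p_continuous) auto

lemma integrable_exceed_prob: "integrable p (\<lambda>b. exceed_prob (v * b) c)"
  using exceed_prob_bounds by (intro integrable_p_bounded[where B = 2] continuous_intros) auto

lemma integrable_std_normal_density_sum: "integrable p (\<lambda>b. \<phi> (v * b - c) + \<phi> (v * b + c))"
  using abs_std_normal_density_sum_le by (intro integrable_p_bounded[where B = 2] continuous_intros)

lemma integral_std_normal_density_sum_pos: "0 < (\<integral>b. \<phi> (v * b - c) + \<phi> (v * b + c) \<partial>p)"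
proof -
  have pos: "0 < \<phi> (v * b - c) + \<phi> (v * b + c)" for b
    using std_normal_density_pos by (simp add: add_pos_pos)
  have "(\<integral>b. \<phi> (v * b - c) + \<phi> (v * b + c) \<partial>p) \<noteq> 0"
  proof
    assume "(\<integral>b. \<phi> (v * b - c) + \<phi> (v * b + c) \<partial>p) = 0"
    then have "AE b in p. \<phi> (v * b - c) + \<phi> (v * b + c) = 0"
      using integral_nonneg_eq_0_iff_AE[OF integrable_std_normal_density_sum] pos by (simp add: less_imp_le)
    then have "AE b in p. False"
      by eventually_elim (use pos in \<open>simp add: less_le\<close>)
    then show False
      by simp
  qed
  moreover have "0 \<le> (\<integral>b. \<phi> (v * b - c) + \<phi> (v * b + c) \<partial>p)"
    using pos by (intro integral_nonneg_AE AE_I2) (simp add: less_imp_le)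
  ultimately show ?thesis
    by linarith
qed

lemma E_BZ_soft_thresh_residual_sq:
  assumes s: "s > 0" and c: "c \<ge> 0"
  shows "E_BZ p (\<lambda>b z. (soft_thresh (b + s * z) (c * s) - b)\<^sup>2) = s\<^sup>2 * avg_soft_thresh_risk p (1 / s) c"
proof -
  interpret pair_prob_space p N01
    by (rule pair_prob_space_N01)
  let ?f = "\<lambda>(b, z). (soft_thresh (b + s * z) (c * s) - b)\<^sup>2"
  have inner: "(\<integral>z. (soft_thresh (b + s * z) (c * s) - b)\<^sup>2 \<partial>N01) = s\<^sup>2 * soft_thresh_risk (b / s) c" for b
    by (simp add: soft_thresh_residual_sq_rescale[OF s] integral_N01_soft_thresh_residual_sq[OF c])
  have "integrable (p \<Otimes>\<^sub>M N01) ?f"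
  proof (rule Fubini_integrable)
    show "integrable p (\<lambda>b. \<integral>z. norm (?f (b, z)) \<partial>N01)"
      using soft_thresh_risk_bounds[OF c] s
      by (intro prior.integrable_const_bound[where B="s\<^sup>2 * (2 * c\<^sup>2 + 2)"])
         (auto simp: inner intro!: mult_left_mono borel_measurable_p_continuous continuous_intros)
    show "AE b in p. integrable N01 (\<lambda>z. ?f (b, z))"
      using integrable_N01_soft_thresh_residual_sq[OF c]
      by (simp add: soft_thresh_residual_sq_rescale[OF s])
  qed measurable
  then have "integral\<^sup>L (p \<Otimes>\<^sub>M N01) ?f = (\<integral>b. (\<integral>z. ?f (b, z) \<partial>N01) \<partial>p)"
    by (rule integral_fst'[symmetric])
  then show ?thesis
    by (simp add: E_BZ_def inner avg_soft_thresh_risk_def)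
qed

lemma fixed_point_equation_rescaled:
  assumes s: "s > 0" and c: "c \<ge> 0"
    and fixed_point: "s\<^sup>2 = sz2 + (1 / \<delta>) * E_BZ p (\<lambda>b z. (soft_thresh (b + s * z) (c * s) - b)\<^sup>2)"
  shows "sz2 * (1 / s)\<^sup>2 + avg_soft_thresh_risk p (1 / s) c / \<delta> = 1"
proof -
  have "sz2 * (1 / s)\<^sup>2 + avg_soft_thresh_risk p (1 / s) c / \<delta>
      = (sz2 + s\<^sup>2 * avg_soft_thresh_risk p (1 / s) c / \<delta>) / s\<^sup>2"
    using s by (simp add: field_simps power2_eq_square)
  also have "\<dots> = 1"
    using fixed_point E_BZ_soft_thresh_residual_sq[OF s c] s by simp
  finally show ?thesis .
qed

lemma P_BZ_soft_thresh_nonzero: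
  assumes s: "s > 0" and c: "c \<ge> 0"
  shows "P_BZ p (\<lambda>b z. \<bar>soft_thresh (b + s * z) (c * s)\<bar> > 0) = avg_exceed_prob p (1 / s) c"
proof -
  interpret pair_prob_space p N01
    by (rule pair_prob_space_N01)
  let ?S = "{(b, z). \<bar>soft_thresh (b + s * z) (c * s)\<bar> > 0}"
  have S [measurable]: "?S \<in> sets (p \<Otimes>\<^sub>M N01)"
  proof -
    have "?S = {x \<in> space (p \<Otimes>\<^sub>M N01). \<bar>soft_thresh (fst x + s * snd x) (c * s)\<bar> > 0}"
      by (auto simp: space_pair_measure)
    also have "\<dots> \<in> sets (p \<Otimes>\<^sub>M N01)"
      by measurable
    finally show ?thesis .
  qed
  have slice: "indicator ?S (b, z) = indicator {z. c < \<bar>b / s + z\<bar>} z" for b z :: real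
  proof -
    have "\<bar>b + s * z\<bar> = s * \<bar>b / s + z\<bar>"
      using s by (simp add: field_simps abs_mult[symmetric])
    then show ?thesis
      using s c by (simp add: soft_thresh_nonzero_iff indicator_def)
  qed
  have "measure (p \<Otimes>\<^sub>M N01) ?S = integral\<^sup>L (p \<Otimes>\<^sub>M N01) (indicator ?S)"
    using S by (simp add: space_pair_measure)
  also have "\<dots> = (\<integral>b. (\<integral>z. indicator ?S (b, z) \<partial>N01) \<partial>p)"
    by (rule integral_fst'[symmetric]) (intro integrable_real_indicator S, simp add: less_top[symmetric])
  also have "\<dots> = (\<integral>b. measure N01 {z. c < \<bar>b / s + z\<bar>} \<partial>p)"
    unfolding slice by simp
  finally show ?thesis
    using c by (simp add: P_BZ_def avg_exceed_prob_def measure_N01_exceed)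
qed

context
  assumes second_moment: "integrable p (\<lambda>b. b\<^sup>2)"
begin

lemma integrable_p_quadratic_growth:
  fixes f :: "real \<Rightarrow> real"
  assumes "continuous_on UNIV f" "\<And>b. \<bar>f b\<bar> \<le> K * (1 + b\<^sup>2)"
  shows "integrable p f"
proof (rule Bochner_Integration.integrable_bound)
  show "integrable p (\<lambda>b. K * (1 + b\<^sup>2))"
    using second_moment by simp
  show "f \<in> borel_measurable p"
    using assms(1) by (rule borel_measurable_p_continuous)
  show "AE b in p. norm (f b) \<le> norm (K * (1 + b\<^sup>2))"
    using order_trans[OF assms(2) abs_ge_self] by simp
qed

lemma integrable_weighted_std_normal_density_diff:
  "integrable p (\<lambda>b. b * (\<phi> (v * b - c) - \<phi> (v * b + c)))"
  using abs_weighted_std_normal_density_diff_le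
  by (intro integrable_p_quadratic_growth[where K = 1] continuous_intros) simp

lemma integrable_sq_std_normal_cdf_diff:
  "integrable p (\<lambda>b. b\<^sup>2 * (\<Phi> (v * b + c) - \<Phi> (v * b - c)))"
proof (rule integrable_p_quadratic_growth[where K = 1])
  show "\<bar>b\<^sup>2 * (\<Phi> (v * b + c) - \<Phi> (v * b - c))\<bar> \<le> 1 * (1 + b\<^sup>2)" for b
  proof -
    have "b\<^sup>2 * \<bar>\<Phi> (v * b + c) - \<Phi> (v * b - c)\<bar> \<le> b\<^sup>2"
      using abs_std_normal_cdf_diff_le by (rule mult_left_le) simp
    then show ?thesis
      by (simp add: abs_mult)
  qed
qed (intro continuous_intros)

lemma DERIV_avg_soft_thresh_risk_fst:
  assumes c: "c \<ge> 0"
  shows "((\<lambda>v. avg_soft_thresh_risk p v c) has_real_derivative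
           2 * v0 * (\<integral>b. b\<^sup>2 * (\<Phi> (v0 * b + c) - \<Phi> (v0 * b - c)) \<partial>p)) (at v0)"
proof -
  have "((\<lambda>v. \<integral>b. soft_thresh_risk (v * b) c \<partial>p) has_real_derivative
      (\<integral>b. 2 * v0 * (b\<^sup>2 * (\<Phi> (v0 * b + c) - \<Phi> (v0 * b - c))) \<partial>p)) (at v0)"
  proof (rule DERIV_integral_parametric[where d = 1 and w = "\<lambda>b. 2 * (\<bar>v0\<bar> + 1) * b\<^sup>2"])
    show "integrable p (\<lambda>b. soft_thresh_risk (t * b) c)" for t
      using soft_thresh_risk_bounds[OF c]
      by (intro integrable_p_bounded[where B = "2 * c\<^sup>2 + 2"] continuous_intros) auto
    show "((\<lambda>t. soft_thresh_risk (t * b) c) has_real_derivative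
        2 * t * (b\<^sup>2 * (\<Phi> (t * b + c) - \<Phi> (t * b - c)))) (at t)" for b t
      by (rule DERIV_cong[OF DERIV_chain2[OF DERIV_soft_thresh_risk_fst, of "\<lambda>t. t * b"]])
         (auto intro!: derivative_eq_intros simp: power2_eq_square)
    show "\<bar>2 * t * (b\<^sup>2 * (\<Phi> (t * b + c) - \<Phi> (t * b - c)))\<bar> \<le> 2 * (\<bar>v0\<bar> + 1) * b\<^sup>2"
      if "\<bar>t - v0\<bar> < 1" for b t
    proof -
      have "b\<^sup>2 * \<bar>\<Phi> (t * b + c) - \<Phi> (t * b - c)\<bar> \<le> b\<^sup>2"
        using abs_std_normal_cdf_diff_le by (rule mult_left_le) simp
      then have "\<bar>2 * t * (b\<^sup>2 * (\<Phi> (t * b + c) - \<Phi> (t * b - c)))\<bar> \<le> 2 * \<bar>t\<bar> * b\<^sup>2"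
        by (simp add: abs_mult mult_left_mono)
      also have "\<dots> \<le> 2 * (\<bar>v0\<bar> + 1) * b\<^sup>2"
        using that by (intro mult_right_mono) auto
      finally show ?thesis .
    qed
  qed (use second_moment in \<open>auto intro!: borel_measurable_p_continuous
      continuous_intros\<close>)
  then show ?thesis
    by (simp add: avg_soft_thresh_risk_def)
qed

lemma DERIV_avg_soft_thresh_risk_snd:
  assumes c0: "c0 > 0"
  shows "((\<lambda>c. avg_soft_thresh_risk p v c) has_real_derivative
           2 * c0 * avg_exceed_prob p v c0 - 2 * (\<integral>b. \<phi> (v * b - c0) + \<phi> (v * b + c0) \<partial>p)) (at c0)"
proof -
  have "((\<lambda>c. avg_soft_thresh_risk p v c) has_real_derivative
      (\<integral>b. 2 * c0 * exceed_prob (v * b) c0 - 2 * (\<phi> (v * b - c0) + \<phi> (v * b + c0)) \<partial>p)) (at c0)"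
    unfolding avg_soft_thresh_risk_def
  proof (rule DERIV_integral_parametric[where d = c0 and w = "\<lambda>b. 8 * c0 + 4"])
    show "integrable p (\<lambda>b. soft_thresh_risk (v * b) t)" if "\<bar>t - c0\<bar> < c0" for t
      using soft_thresh_risk_bounds[of t] that
      by (intro integrable_p_bounded[where B = "2 * t\<^sup>2 + 2"] continuous_intros) auto
    show "((\<lambda>t. soft_thresh_risk (v * b) t) has_real_derivative
        2 * t * exceed_prob (v * b) t - 2 * (\<phi> (v * b - t) + \<phi> (v * b + t))) (at t)" for b t
      by (rule DERIV_soft_thresh_risk_snd)
    show "\<bar>2 * t * exceed_prob (v * b) t - 2 * (\<phi> (v * b - t) + \<phi> (v * b + t))\<bar> \<le> 8 * c0 + 4"
      if "\<bar>t - c0\<bar> < c0" for b t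
    proof -
      have t: "0 \<le> 2 * t" "t \<le> 2 * c0"
        using that by auto
      have "0 \<le> 2 * t * exceed_prob (v * b) t"
        using exceed_prob_bounds[of "v * b" t] t by simp
      moreover have "2 * t * exceed_prob (v * b) t \<le> 2 * t * 2"
        by (rule mult_left_mono) (use exceed_prob_bounds[of "v * b" t] t in auto)
      moreover have "\<bar>x - 2 * y\<bar> \<le> 8 * c0 + 4" if "0 \<le> x" "x \<le> 2 * t * 2" "\<bar>y\<bar> \<le> 2" for x y
        using that t by linarith
      ultimately show ?thesis
        using abs_std_normal_density_sum_le by blast
    qed
  qed (use c0 in \<open>auto intro!: borel_measurable_p_continuous continuous_intros\<close>)
  also have "(\<integral>b. 2 * c0 * exceed_prob (v * b) c0 - 2 * (\<phi> (v * b - c0) + \<phi> (v * b + c0)) \<partial>p)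
      = (\<integral>b. 2 * c0 * exceed_prob (v * b) c0 \<partial>p) - (\<integral>b. 2 * (\<phi> (v * b - c0) + \<phi> (v * b + c0)) \<partial>p)"
    by (intro Bochner_Integration.integral_diff integrable_mult_right integrable_exceed_prob
        integrable_std_normal_density_sum)
  finally show ?thesis
    by (simp only: integral_mult_right_zero avg_exceed_prob_def)
qed

lemma DERIV_avg_exceed_prob_fst:
  "((\<lambda>v. avg_exceed_prob p v c) has_real_derivative
     (\<integral>b. b * (\<phi> (v0 * b - c) - \<phi> (v0 * b + c)) \<partial>p)) (at v0)"
  unfolding avg_exceed_prob_def
proof (rule DERIV_integral_parametric[where d = 1 and w = "\<lambda>b. 1 + b\<^sup>2"])
  show "integrable p (\<lambda>b. exceed_prob (t * b) c)" for t
    by (rule integrable_exceed_prob)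
  show "((\<lambda>t. exceed_prob (t * b) c) has_real_derivative b * (\<phi> (t * b - c) - \<phi> (t * b + c))) (at t)"
    for b t
    by (rule DERIV_cong[OF DERIV_chain2[OF DERIV_exceed_prob_fst, of "\<lambda>t. t * b"]])
       (auto intro!: derivative_eq_intros)
  show "\<bar>b * (\<phi> (t * b - c) - \<phi> (t * b + c))\<bar> \<le> 1 + b\<^sup>2" for b t
    using abs_weighted_std_normal_density_diff_le .
qed (use second_moment in \<open>auto intro!: borel_measurable_p_continuous
    continuous_intros\<close>)

lemma DERIV_avg_exceed_prob_snd:
  "((\<lambda>c. avg_exceed_prob p v c) has_real_derivative
     - (\<integral>b. \<phi> (v * b - c0) + \<phi> (v * b + c0) \<partial>p)) (at c0)"
proof -
  have "((\<lambda>c. \<integral>b. exceed_prob (v * b) c \<partial>p) has_real_derivative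
      (\<integral>b. - (\<phi> (v * b - c0) + \<phi> (v * b + c0)) \<partial>p)) (at c0)"
  proof (rule DERIV_integral_parametric[where d = 1 and w = "\<lambda>b. 2"])
    show "integrable p (\<lambda>b. exceed_prob (v * b) t)" for t
      by (rule integrable_exceed_prob)
    show "\<bar>- (\<phi> (v * b - t) + \<phi> (v * b + t))\<bar> \<le> 2" for b t
      by (simp only: abs_minus_cancel abs_std_normal_density_sum_le)
    show "((\<lambda>t. exceed_prob (v * b) t) has_real_derivative - (\<phi> (v * b - t) + \<phi> (v * b + t))) (at t)"
      for b t
      by (rule DERIV_exceed_prob_snd)
  qed (auto intro!: borel_measurable_p_continuous continuous_intros)
  then show ?thesis
    unfolding avg_exceed_prob_def by (simp only: Bochner_Integration.integral_minus)
qed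

lemma isCont_integral_sq_std_normal_cdf_diff:
  "isCont (\<lambda>x. \<integral>b. b\<^sup>2 * (\<Phi> (fst x * b + snd x) - \<Phi> (fst x * b - snd x)) \<partial>p) x0"
proof (rule isCont_integral_parametric[where e = 1 and w = "\<lambda>b. b\<^sup>2"])
  show "\<bar>b\<^sup>2 * (\<Phi> (fst x * b + snd x) - \<Phi> (fst x * b - snd x))\<bar> \<le> b\<^sup>2" for b x
    using abs_std_normal_cdf_diff_le by (simp add: abs_mult mult_left_le)
qed (use second_moment in \<open>auto intro!: borel_measurable_p_continuous
    continuous_intros\<close>)

lemma isCont_integral_std_normal_density_diff:
  "isCont (\<lambda>x. \<integral>b. b * (\<phi> (fst x * b - snd x) - \<phi> (fst x * b + snd x)) \<partial>p) x0"
proof (rule isCont_integral_parametric[where e = 1 and w = "\<lambda>b. 1 + b\<^sup>2"])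
  show "\<bar>b * (\<phi> (fst x * b - snd x) - \<phi> (fst x * b + snd x))\<bar> \<le> 1 + b\<^sup>2" for b x
    using abs_weighted_std_normal_density_diff_le .
qed (use second_moment in \<open>auto intro!: borel_measurable_p_continuous
    continuous_intros\<close>)

lemma integral_weighted_std_normal_density_diff_bounds:
  assumes v: "v > 0" and c: "c \<ge> 0"
  shows "0 \<le> (\<integral>b. b * (\<phi> (v * b - c) - \<phi> (v * b + c)) \<partial>p)"
    and "(\<integral>b. b * (\<phi> (v * b - c) - \<phi> (v * b + c)) \<partial>p)
           \<le> v * (\<integral>b. b\<^sup>2 * (\<Phi> (v * b + c) - \<Phi> (v * b - c)) \<partial>p)"
proof -
  have "0 \<le> v * (b * (\<phi> (v * b - c) - \<phi> (v * b + c)))"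
    and "v * (b * (\<phi> (v * b - c) - \<phi> (v * b + c))) \<le> v * (v * (b\<^sup>2 * (\<Phi> (v * b + c) - \<Phi> (v * b - c))))"
    for b
    using std_normal_density_diff_bounds[OF c, of "v * b"] by (simp_all add: power2_eq_square ac_simps)
  then have pos: "0 \<le> b * (\<phi> (v * b - c) - \<phi> (v * b + c))"
    and le: "b * (\<phi> (v * b - c) - \<phi> (v * b + c)) \<le> v * (b\<^sup>2 * (\<Phi> (v * b + c) - \<Phi> (v * b - c)))" for b
    using v by (simp_all add: zero_le_mult_iff)
  show "0 \<le> (\<integral>b. b * (\<phi> (v * b - c) - \<phi> (v * b + c)) \<partial>p)"
    using pos by (intro integral_nonneg_AE AE_I2)
  have "(\<integral>b. b * (\<phi> (v * b - c) - \<phi> (v * b + c)) \<partial>p)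
      \<le> (\<integral>b. v * (b\<^sup>2 * (\<Phi> (v * b + c) - \<Phi> (v * b - c))) \<partial>p)"
    using le by (intro integral_mono integrable_mult_right integrable_weighted_std_normal_density_diff
        integrable_sq_std_normal_cdf_diff)
  then show "(\<integral>b. b * (\<phi> (v * b - c) - \<phi> (v * b + c)) \<partial>p)
           \<le> v * (\<integral>b. b\<^sup>2 * (\<Phi> (v * b + c) - \<Phi> (v * b - c)) \<partial>p)"
    by simp
qed

lemma integral_sq_std_normal_cdf_diff_nonneg:
  "c \<ge> 0 \<Longrightarrow> 0 \<le> (\<integral>b. b\<^sup>2 * (\<Phi> (v * b + c) - \<Phi> (v * b - c)) \<partial>p)"
  using std_normal_cdf_diff_nonneg by (intro integral_nonneg_AE AE_I2) simp

lemma strict_mono_fixed_point_map: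
  assumes \<delta>: "\<delta> > 0" and noise: "sz2 > 0" and c: "c \<ge> 0"
  shows "strict_mono_on {0<..} (\<lambda>v. sz2 * v\<^sup>2 + avg_soft_thresh_risk p v c / \<delta>)"
proof (rule strict_mono_onI)
  fix x y :: real
  assume "x \<in> {0<..}" "x < y"
  show "sz2 * x\<^sup>2 + avg_soft_thresh_risk p x c / \<delta> < sz2 * y\<^sup>2 + avg_soft_thresh_risk p y c / \<delta>"
  proof (rule DERIV_pos_imp_increasing[OF \<open>x < y\<close>])
    fix t
    assume "x \<le> t" "t \<le> y"
    then have t: "t > 0"
      using \<open>x \<in> {0<..}\<close> by auto
    have "0 < 2 * sz2 * t + 2 * t * (\<integral>b. b\<^sup>2 * (\<Phi> (t * b + c) - \<Phi> (t * b - c)) \<partial>p) / \<delta>"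
      using integral_sq_std_normal_cdf_diff_nonneg[OF c] t noise \<delta> by (simp add: add_pos_nonneg)
    moreover have "((\<lambda>v. sz2 * v\<^sup>2 + avg_soft_thresh_risk p v c / \<delta>) has_real_derivative
        2 * sz2 * t + 2 * t * (\<integral>b. b\<^sup>2 * (\<Phi> (t * b + c) - \<Phi> (t * b - c)) \<partial>p) / \<delta>) (at t)"
      using DERIV_avg_soft_thresh_risk_fst[OF c, of t] \<delta>
      by (auto intro!: derivative_eq_intros)
    ultimately show "\<exists>D. ((\<lambda>v. sz2 * v\<^sup>2 + avg_soft_thresh_risk p v c / \<delta>) has_real_derivative D) (at t) \<and> D > 0"
      by blast
  qed
qed

lemma tendsto_fixed_point_root:
  fixes u :: "real \<Rightarrow> real"
  assumes \<delta>: "\<delta> > 0" and noise: "sz2 > 0" and U: "open U" "c0 \<in> U"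
    and root: "\<And>c. c \<in> U \<Longrightarrow> 0 < c \<and> 0 < u c \<and> sz2 * (u c)\<^sup>2 + avg_soft_thresh_risk p (u c) c / \<delta> = 1"
  shows "(u \<longlongrightarrow> u c0) (at c0)"
proof (rule tendsto_implicit_root[where R = "\<lambda>v c. sz2 * v\<^sup>2 + avg_soft_thresh_risk p v c / \<delta> - 1"])
  have c0: "0 < c0"
    using root[OF U(2)] by simp
  have near: "eventually (\<lambda>c. c \<in> U) (nhds c0)"
    using U by (rule eventually_nhds_in_open)
  then show "eventually (\<lambda>c. strict_mono_on {0<..} (\<lambda>v. sz2 * v\<^sup>2 + avg_soft_thresh_risk p v c / \<delta> - 1))
      (nhds c0)"
    by eventually_elim
       (use root strict_mono_fixed_point_map[OF \<delta> noise] in \<open>auto simp: strict_mono_on_def less_imp_le\<close>)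
  show "isCont (\<lambda>c. sz2 * v\<^sup>2 + avg_soft_thresh_risk p v c / \<delta> - 1) c0" for v
    using \<delta> by (intro continuous_intros DERIV_isCont[OF DERIV_avg_soft_thresh_risk_snd[OF c0]]) simp
  show "eventually (\<lambda>c. 0 < u c \<and> sz2 * (u c)\<^sup>2 + avg_soft_thresh_risk p (u c) c / \<delta> - 1 = 0) (at c0)"
    using near by (auto simp: eventually_at_filter dest: root elim: eventually_mono)
qed (use root[OF U(2)] in auto)

lemma DERIV_fixed_point_root:
  fixes u :: "real \<Rightarrow> real"
  assumes \<delta>: "\<delta> > 0" and noise: "sz2 > 0" and U: "open U" "c0 \<in> U"
    and root: "\<And>c. c \<in> U \<Longrightarrow> 0 < c \<and> 0 < u c \<and> sz2 * (u c)\<^sup>2 + avg_soft_thresh_risk p (u c) c / \<delta> = 1"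
  shows "(u has_real_derivative
      - ((2 * c0 * avg_exceed_prob p (u c0) c0 - 2 * (\<integral>b. \<phi> (u c0 * b - c0) + \<phi> (u c0 * b + c0) \<partial>p)) / \<delta>)
      / (2 * sz2 * u c0 + 2 * u c0 * (\<integral>b. b\<^sup>2 * (\<Phi> (u c0 * b + c0) - \<Phi> (u c0 * b - c0)) \<partial>p) / \<delta>))
      (at c0)"
proof -
  define R where "R v c = sz2 * v\<^sup>2 + avg_soft_thresh_risk p v c / \<delta> - 1" for v c
  define Rv where "Rv v c = 2 * sz2 * v + 2 * v * (\<integral>b. b\<^sup>2 * (\<Phi> (v * b + c) - \<Phi> (v * b - c)) \<partial>p) / \<delta>"
    for v c
  have c0: "0 < c0" "0 < u c0"
    using root[OF U(2)] by auto
  have R_v: "((\<lambda>v. R v c) has_real_derivative Rv v c) (at v)" if "c \<ge> 0" for v c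
    unfolding R_def Rv_def using DERIV_avg_soft_thresh_risk_fst[OF that, of v] \<delta>
    by (auto intro!: derivative_eq_intros)
  have R_c: "((\<lambda>c. R (u c0) c) has_real_derivative
      (2 * c0 * avg_exceed_prob p (u c0) c0 - 2 * (\<integral>b. \<phi> (u c0 * b - c0) + \<phi> (u c0 * b + c0) \<partial>p)) / \<delta>)
      (at c0)"
    unfolding R_def using DERIV_avg_soft_thresh_risk_snd[OF c0(1), of "u c0"] \<delta>
    by (auto intro!: derivative_eq_intros)
  have "eventually (\<lambda>c. R (u c) c = 0) (at c0)"
    using eventually_nhds_in_open[OF U] root
    by (auto simp: eventually_at_filter R_def elim: eventually_mono)
  moreover have "isCont (\<lambda>x. Rv (fst x) (snd x)) (u c0, c0)"
    unfolding Rv_def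
    by (intro continuous_intros isCont_integral_sq_std_normal_cdf_diff) (use \<delta> in simp)
  moreover have "0 < Rv (u c0) c0"
    using integral_sq_std_normal_cdf_diff_nonneg[of c0 "u c0"] c0 \<delta> noise
    by (simp add: Rv_def add_pos_nonneg)
  ultimately show ?thesis
    unfolding Rv_def[symmetric]
  proof (intro implicit_DERIV[where d = "min (u c0) c0" and R = R and Ru = Rv])
    show "((\<lambda>v. R v c) has_real_derivative Rv v c) (at v)"
      if "\<bar>v - u c0\<bar> < min (u c0) c0" "\<bar>c - c0\<bar> < min (u c0) c0" for v c
      using that by (intro R_v) auto
  qed (use tendsto_fixed_point_root[OF \<delta> noise U root] root[OF U(2)] R_c in \<open>auto simp: R_def\<close>)
qed

lemma DERIV_avg_exceed_prob_along_root:
  fixes u :: "real \<Rightarrow> real"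
  assumes \<delta>: "\<delta> > 0" and noise: "sz2 > 0" and U: "open U" "c0 \<in> U"
    and root: "\<And>c. c \<in> U \<Longrightarrow> 0 < c \<and> 0 < u c \<and> sz2 * (u c)\<^sup>2 + avg_soft_thresh_risk p (u c) c / \<delta> = 1"
  shows "\<exists>D. ((\<lambda>c. avg_exceed_prob p (u c) c) has_real_derivative D) (at c0) \<and> D < 0"
proof -
  define A where "A = (\<integral>b. b * (\<phi> (u c0 * b - c0) - \<phi> (u c0 * b + c0)) \<partial>p)"
  define S where "S = (\<integral>b. b\<^sup>2 * (\<Phi> (u c0 * b + c0) - \<Phi> (u c0 * b - c0)) \<partial>p)"
  define E where "E = (\<integral>b. \<phi> (u c0 * b - c0) + \<phi> (u c0 * b + c0) \<partial>p)"
  define Q where "Q = avg_exceed_prob p (u c0) c0"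
  define u' where "u' = - ((2 * c0 * Q - 2 * E) / \<delta>) / (2 * sz2 * u c0 + 2 * u c0 * S / \<delta>)"
  have c0: "0 < c0" "0 < u c0"
    using root[OF U(2)] by auto
  have "(u has_real_derivative u') (at c0)"
    unfolding u'_def Q_def E_def S_def by (rule DERIV_fixed_point_root[OF \<delta> noise U root])
  then have "((\<lambda>c. avg_exceed_prob p (u c) c) has_real_derivative A * u' + - E) (at c0)"
    unfolding A_def E_def
    by (intro DERIV_compose_partial[where d = 1
          and Fu = "\<lambda>v c. \<integral>b. b * (\<phi> (v * b - c) - \<phi> (v * b + c)) \<partial>p"])
       (auto intro: DERIV_avg_exceed_prob_fst DERIV_avg_exceed_prob_snd
         isCont_integral_std_normal_density_diff)
  moreover have "0 \<le> Q"
    unfolding Q_def avg_exceed_prob_def using exceed_prob_bounds by (intro integral_nonneg_AE AE_I2)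
  then have "A * u' - E < 0"
    unfolding u'_def A_def S_def E_def
    using integral_weighted_std_normal_density_diff_bounds[OF c0(2) less_imp_le[OF c0(1)]]
      integral_sq_std_normal_cdf_diff_nonneg[OF less_imp_le[OF c0(1)]]
      integral_std_normal_density_sum_pos
    by (intro implicit_derivative_sign[OF \<delta> noise c0(2) c0(1)])
  ultimately show ?thesis
    by (intro exI[of _ "A * u' - E"]) simp
qed

end

end

theorem lemma8:
  fixes p :: "real measure" and delta sz2 chi lam :: real
    and sighat :: "real \<Rightarrow> real" and U :: "real set"
  assumes delta: "0 < delta" "delta < 1"
    and noise: "sz2 > 0"
    and prob: "prob_space p" and sets_p: "sets p = sets borel"
    and second_moment: "integrable p (\<lambda>b. b\<^sup>2)"
    and U: "open U" "chi \<in> U"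
    and fixed_point: "\<And>c. c \<in> U \<Longrightarrow> c > 0 \<and> sighat c > 0 \<and>
        (sighat c)\<^sup>2 = sz2 + (1 / delta) *
          E_BZ p (\<lambda>b z. (soft_thresh (b + sighat c * z) (c * sighat c) - b)\<^sup>2)"
    and lambda_eq: "lam = chi * sighat chi *
          (1 - (1 / delta) * P_BZ p (\<lambda>b z. \<bar>b + sighat chi * z\<bar> > chi * sighat chi))"
    and lambda_pos: "lam > 0"
  shows "\<exists>D. ((\<lambda>c. P_BZ p (\<lambda>b z. \<bar>soft_thresh (b + sighat c * z) (c * sighat c)\<bar> > 0))
              has_real_derivative D) (at chi) \<and> D < 0"
proof -
  define u where "u c = 1 / sighat c" for c
  have root: "0 < c \<and> 0 < u c \<and> sz2 * (u c)\<^sup>2 + avg_soft_thresh_risk p (u c) c / delta = 1"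
    if "c \<in> U" for c
    using fixed_point[OF that] fixed_point_equation_rescaled[OF prob sets_p, of "sighat c" c sz2 delta]
    by (simp add: u_def)
  obtain D where D: "((\<lambda>c. avg_exceed_prob p (u c) c) has_real_derivative D) (at chi)" "D < 0"
    using DERIV_avg_exceed_prob_along_root[OF prob sets_p second_moment delta(1) noise U root] by blast
  have "((\<lambda>c. P_BZ p (\<lambda>b z. \<bar>soft_thresh (b + sighat c * z) (c * sighat c)\<bar> > 0))
      has_real_derivative D) (at chi)"
  proof (rule has_field_derivative_transform_within_open[OF D(1) U])
    show "avg_exceed_prob p (u c) c = P_BZ p (\<lambda>b z. \<bar>soft_thresh (b + sighat c * z) (c * sighat c)\<bar> > 0)"
      if "c \<in> U" for c
      using P_BZ_soft_thresh_nonzero[OF prob sets_p, of "sighat c" c] fixed_point[OF that]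
      by (simp add: u_def)
  qed
  with D(2) show ?thesis
    by blast
qed

end
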